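(* Let $\mathcal{BIP}$ be the class of bipartite graphs. Then: (i) if $j\in\{4,5,6\}$, then $R_1^{\mathcal{BIP}}(4,j)=2j-3$; (ii) if $j\in\{3,7\}$, then $R_1^{\mathcal{BIP}}(4,j)=2j-2$; (iii) if $j\in\{8,9,13,14\}$, then $R_1^{\mathcal{BIP}}(4,j)=2j-1$.
   Context: All graphs are finite and simple. For a graph $G$ and a nonnegative integer $k$, a $k$-sparse $j$-set is a set of $j$ vertices of $G$ inducing a subgraph of maximum degree at most $k$; a $k$-dense $i$-set is a set of $i$ vertices of $G$ that is $k$-sparse in the complement of $G$. For a graph class $\mathcal{G}$, $R_k^{\mathcal{G}}(i,j)$ is the smallest natural number $n$ such that every graph on $n$ vertices in $\mathcal{G}$ has either a $k$-dense $i$-set or a $k$-sparse $j$-set. *)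

theory Defs
  imports Main
begin

text \<open>A finite simple graph on the vertex set {0..<n}, given by an edge relation E.
  Every finite simple graph on n vertices is isomorphic to such a graph.\<close>
definition simple_graph :: "nat \<Rightarrow> (nat \<Rightarrow> nat \<Rightarrow> bool) \<Rightarrow> bool" where
  "simple_graph n E \<longleftrightarrow> (\<forall>u v. E u v \<longrightarrow> u < n \<and> v < n \<and> u \<noteq> v \<and> E v u)"

definition bipartite :: "nat \<Rightarrow> (nat \<Rightarrow> nat \<Rightarrow> bool) \<Rightarrow> bool" where
  "bipartite n E \<longleftrightarrow> (\<exists>A. \<forall>u v. E u v \<longrightarrow> (u \<in> A \<longleftrightarrow> v \<notin> A))"

definition BIP :: "nat \<Rightarrow> (nat \<Rightarrow> nat \<Rightarrow> bool) \<Rightarrow> bool" where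
  "BIP n E \<longleftrightarrow> simple_graph n E \<and> bipartite n E"

definition k_sparse_set :: "nat \<Rightarrow> (nat \<Rightarrow> nat \<Rightarrow> bool) \<Rightarrow> nat \<Rightarrow> nat \<Rightarrow> nat set \<Rightarrow> bool" where
  "k_sparse_set n E k j S \<longleftrightarrow> S \<subseteq> {0..<n} \<and> card S = j \<and>
     (\<forall>v\<in>S. card {u\<in>S. E v u} \<le> k)"

definition compl_graph :: "nat \<Rightarrow> (nat \<Rightarrow> nat \<Rightarrow> bool) \<Rightarrow> nat \<Rightarrow> nat \<Rightarrow> bool" where
  "compl_graph n E u v \<longleftrightarrow> u < n \<and> v < n \<and> u \<noteq> v \<and> \<not> E u v"

definition k_dense_set :: "nat \<Rightarrow> (nat \<Rightarrow> nat \<Rightarrow> bool) \<Rightarrow> nat \<Rightarrow> nat \<Rightarrow> nat set \<Rightarrow> bool" where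
  "k_dense_set n E k i S \<longleftrightarrow> k_sparse_set n (compl_graph n E) k i S"

definition ramsey_num ::
  "(nat \<Rightarrow> (nat \<Rightarrow> nat \<Rightarrow> bool) \<Rightarrow> bool) \<Rightarrow> nat \<Rightarrow> nat \<Rightarrow> nat \<Rightarrow> nat" where
  "ramsey_num G k i j = (LEAST n. \<forall>E. G n E \<longrightarrow>
      (\<exists>S. k_dense_set n E k i S) \<or> (\<exists>S. k_sparse_set n E k j S))"

end

theory Submission
  imports Defs
begin

text \<open>Fix a bipartite graph with sides \<open>X\<close> and \<open>Y\<close>. The complement of a 4-cycle is a perfect
  matching, and in a triangle-free graph every 1-dense 4-set spans a 4-cycle; so we may assume
  that no two vertices on one side have two common neighbours.

  A 1-sparse set \<open>S\<close> is controlled by its trace \<open>T = S \<inter> Y\<close>: the best completion of \<open>T\<close> adds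
  the vertices of \<open>X\<close> without neighbours in \<open>T\<close> and one private neighbour of each vertex of
  \<open>T\<close> that has one, and \<open>T = {}\<close> gives back \<open>X\<close>. When both sides have fewer than \<open>j\<close>
  vertices, one side \<open>X\<close> has \<open>j - 1\<close>, and the upper bounds come from a trace beating
  \<open>|X|\<close>: if none exists, every vertex of \<open>Y\<close> has at least two neighbours, those with exactly
  two have disjoint neighbourhoods, and counting pairs of neighbours, which distinct vertices
  cannot share, gives a contradiction. The lower bounds are explicit 4-cycle-free bipartite
  graphs on \<open>R - 1\<close> vertices; for the small ones all traces are enumerated, for the large
  ones (all degrees 3 or 4) the same pair counting bounds both halves of a 1-sparse set.\<close>

text \<open>Concrete graphs are given by adjacency lists, the vertices below \<open>p\<close> forming one side,
  so that the properties needed of them can be checked by evaluation.\<close>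

definition adj_graph :: "nat list list \<Rightarrow> nat \<Rightarrow> nat \<Rightarrow> bool" where
  "adj_graph adj u v \<longleftrightarrow> u < length adj \<and> v \<in> set (adj ! u)"

definition bipartite_adj :: "nat list list \<Rightarrow> nat \<Rightarrow> bool" where
  "bipartite_adj adj p \<longleftrightarrow> p \<le> length adj \<and>
     list_all (\<lambda>u. distinct (adj ! u) \<and>
       list_all (\<lambda>v. v < length adj \<and> u \<in> set (adj ! v) \<and> (u < p \<longleftrightarrow> \<not> v < p)) (adj ! u))
     [0..<length adj]"

definition c4_free_adj :: "nat list list \<Rightarrow> bool" where
  "c4_free_adj adj \<longleftrightarrow> list_all (\<lambda>u. list_all (\<lambda>v.
     length (filter (\<lambda>x. x \<in> set (adj ! v)) (adj ! u)) \<le> 1) [Suc u..<length adj]) [0..<length adj]"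

text \<open>The certificates below encode the hypotheses of the two lower-bound criteria proved later:
  \<open>sparse_count_adj\<close> evaluates \<open>sparse_count\<close> on a list of vertices of the side
  \<open>{p..<length adj}\<close>, and \<open>side_fits b x k\<close> is the condition that \<open>b\<close> vertices of a 1-sparse
  set on one side must satisfy when \<open>x\<close> vertices of the other side lie outside it.\<close>

definition sparse_count_adj :: "nat list list \<Rightarrow> nat \<Rightarrow> nat list \<Rightarrow> nat" where
  "sparse_count_adj adj p ys =
     length ys
     + length (filter (\<lambda>x. list_all (\<lambda>y. y \<notin> set (adj ! x)) ys) [0..<p])
     + length (filter (\<lambda>y. list_ex (\<lambda>x. y \<in> set (adj ! x) \<and>
         list_all (\<lambda>y'. y' \<in> set (adj ! x) \<longrightarrow> y' = y) ys) [0..<p]) ys)"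

definition side_fits :: "nat \<Rightarrow> nat \<Rightarrow> nat \<Rightarrow> bool" where
  "side_fits b x k \<longleftrightarrow> b \<le> x choose 2 \<and> 3 * b \<le> (x choose 2) + 2 * k"

definition enumeration_certificate :: "nat list list \<Rightarrow> nat \<Rightarrow> nat \<Rightarrow> bool" where
  "enumeration_certificate adj p j \<longleftrightarrow> bipartite_adj adj p \<and> c4_free_adj adj \<and>
     list_all (\<lambda>ys. sparse_count_adj adj p ys < j) (subseqs [p..<length adj])"

definition counting_certificate :: "nat list list \<Rightarrow> nat \<Rightarrow> nat \<Rightarrow> bool" where
  "counting_certificate adj p j \<longleftrightarrow> bipartite_adj adj p \<and> c4_free_adj adj \<and>
     list_all (\<lambda>u. 3 \<le> length (adj ! u)) [0..<length adj] \<and>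
     list_all (\<lambda>a. a \<le> p \<longrightarrow> j - a \<le> length adj - p \<longrightarrow>
       \<not> (side_fits (j - a) (p - a) (length (filter (\<lambda>u. length (adj ! u) < 4) [p..<length adj])) \<and>
          side_fits a (length adj - p - (j - a)) (length (filter (\<lambda>u. length (adj ! u) < 4) [0..<p]))))
       [0..<Suc j]"

text \<open>\<open>witness_5\<close> and \<open>witness_6\<close> are the cycles of length 6 and 8, \<open>witness_8\<close> is the
  Heawood graph and \<open>witness_14\<close> the point-line incidence graph of the projective plane of
  order 3.\<close>

definition witness_3 :: "nat list list" where
  "witness_3 =
    [[2], [2], [0, 1]]"

definition witness_4 :: "nat list list" where
  "witness_4 =
    [[2], [2, 3], [0, 1], [1]]"

definition witness_5 :: "nat list list" where
  "witness_5 =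
    [[3, 5], [3, 4], [4, 5], [0, 1], [1, 2], [0, 2]]"

definition witness_6 :: "nat list list" where
  "witness_6 =
    [[4, 7], [4, 5], [5, 6], [6, 7], [0, 1], [1, 2], [2, 3], [0, 3]]"

definition witness_7 :: "nat list list" where
  "witness_7 =
    [[6, 7, 10], [6, 8, 9], [7, 8], [7, 9], [8, 10], [9, 10], [0, 1], [0, 2, 3], [1, 2, 4],
     [1, 3, 5], [0, 4, 5]]"

definition witness_8 :: "nat list list" where
  "witness_8 =
    [[7, 11, 13], [7, 8, 12], [8, 9, 13], [7, 9, 10], [8, 10, 11], [9, 11, 12],
     [10, 12, 13], [0, 1, 3], [1, 2, 4], [2, 3, 5], [3, 4, 6], [0, 4, 5], [1, 5, 6],
     [0, 2, 6]]"

definition witness_9 :: "nat list list" where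
  "witness_9 =
    [[8, 11, 12], [8, 9, 13], [9, 10, 14], [10, 11, 15], [8, 14, 15], [9, 12, 15],
     [10, 12, 13], [11, 13, 14], [0, 1, 4], [1, 2, 5], [2, 3, 6], [0, 3, 7], [0, 5, 6],
     [1, 6, 7], [2, 4, 7], [3, 4, 5]]"

definition witness_13 :: "nat list list" where
  "witness_13 =
    [[12, 15, 16, 17], [14, 15, 20, 22], [13, 15, 19, 23], [12, 13, 14], [17, 20, 23],
     [16, 19, 22], [12, 21, 22, 23], [14, 17, 19, 21], [13, 16, 20, 21], [12, 18, 19, 20],
     [13, 17, 18, 22], [14, 16, 18, 23], [0, 3, 6, 9], [2, 3, 8, 10], [1, 3, 7, 11],
     [0, 1, 2], [0, 5, 8, 11], [0, 4, 7, 10], [9, 10, 11], [2, 5, 7, 9], [1, 4, 8, 9],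
     [6, 7, 8], [1, 5, 6, 10], [2, 4, 6, 11]]"

definition witness_14 :: "nat list list" where
  "witness_14 =
    [[14, 17, 20, 23], [13, 17, 18, 19], [16, 17, 22, 24], [15, 17, 21, 25],
     [13, 14, 15, 16], [14, 19, 22, 25], [14, 18, 21, 24], [13, 23, 24, 25],
     [16, 19, 21, 23], [15, 18, 22, 23], [13, 20, 21, 22], [15, 19, 20, 24],
     [16, 18, 20, 25], [1, 4, 7, 10], [0, 4, 5, 6], [3, 4, 9, 11], [2, 4, 8, 12],
     [0, 1, 2, 3], [1, 6, 9, 12], [1, 5, 8, 11], [0, 10, 11, 12], [3, 6, 8, 10],
     [2, 5, 9, 10], [0, 7, 8, 9], [2, 6, 7, 11], [3, 5, 7, 12]]"

lemma witness_3_certificate: "enumeration_certificate witness_3 2 3"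
  unfolding enumeration_certificate_def bipartite_adj_def c4_free_adj_def
    sparse_count_adj_def witness_3_def
  by code_simp

lemma witness_4_certificate: "enumeration_certificate witness_4 2 4"
  unfolding enumeration_certificate_def bipartite_adj_def c4_free_adj_def
    sparse_count_adj_def witness_4_def
  by code_simp

lemma witness_5_certificate: "enumeration_certificate witness_5 3 5"
  unfolding enumeration_certificate_def bipartite_adj_def c4_free_adj_def
    sparse_count_adj_def witness_5_def
  by code_simp

lemma witness_6_certificate: "enumeration_certificate witness_6 4 6"
  unfolding enumeration_certificate_def bipartite_adj_def c4_free_adj_def
    sparse_count_adj_def witness_6_def
  by code_simp

lemma witness_7_certificate: "enumeration_certificate witness_7 6 7"
  unfolding enumeration_certificate_def bipartite_adj_def c4_free_adj_def
    sparse_count_adj_def witness_7_def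
  by code_simp

lemma witness_8_certificate: "counting_certificate witness_8 7 8"
  unfolding counting_certificate_def bipartite_adj_def c4_free_adj_def
    side_fits_def witness_8_def
  by code_simp

lemma witness_9_certificate: "counting_certificate witness_9 8 9"
  unfolding counting_certificate_def bipartite_adj_def c4_free_adj_def
    side_fits_def witness_9_def
  by code_simp

lemma witness_13_certificate: "counting_certificate witness_13 12 13"
  unfolding counting_certificate_def bipartite_adj_def c4_free_adj_def
    side_fits_def witness_13_def
  by code_simp

lemma witness_14_certificate: "counting_certificate witness_14 13 14"
  unfolding counting_certificate_def bipartite_adj_def c4_free_adj_def
    side_fits_def witness_14_def
  by code_simp

lemma card_le_1_if_subset_singleton: "A \<subseteq> {a} \<Longrightarrow> card A \<le> 1"
  using card_mono[of "{a}" A] by simp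

lemma two_elements_if_card_ge_2:
  assumes "2 \<le> card A" obtains a b where "a \<in> A" "b \<in> A" "a \<noteq> b"
  using assms by (metis One_nat_def card.infinite card_le_Suc0_iff_eq not_less_eq_eq numeral_2_eq_2
      zero_le)

definition bipartition :: "nat \<Rightarrow> (nat \<Rightarrow> nat \<Rightarrow> bool) \<Rightarrow> nat set \<Rightarrow> nat set \<Rightarrow> bool" where
  "bipartition n E X Y \<longleftrightarrow> X \<union> Y = {0..<n} \<and> X \<inter> Y = {} \<and>
     (\<forall>u\<in>X. \<forall>v\<in>X. \<not> E u v) \<and> (\<forall>u\<in>Y. \<forall>v\<in>Y. \<not> E u v)"

lemma bipartition_swap: "bipartition n E X Y \<Longrightarrow> bipartition n E Y X"
  unfolding bipartition_def by blast

lemma bipartition_subset: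
  assumes "bipartition n E X Y" shows "X \<subseteq> {0..<n}" "Y \<subseteq> {0..<n}"
  using assms unfolding bipartition_def by blast+

lemma bipartition_finite:
  assumes "bipartition n E X Y" shows "finite X" "finite Y"
  using bipartition_subset[OF assms] finite_subset by blast+

lemma bipartition_card: "bipartition n E X Y \<Longrightarrow> card X + card Y = n"
  by (metis bipartition_def bipartition_finite card_Un_disjoint card_atLeastLessThan diff_zero)

lemma bipartition_no_edge:
  assumes "bipartition n E X Y"
  shows "u \<in> X \<Longrightarrow> v \<in> X \<Longrightarrow> \<not> E u v" "u \<in> Y \<Longrightarrow> v \<in> Y \<Longrightarrow> \<not> E u v"
  using assms unfolding bipartition_def by blast+

lemma BIP_obtain_bipartition:
  assumes "BIP n E"
  obtains X Y where "bipartition n E X Y"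
proof -
  obtain A where "\<forall>u v. E u v \<longrightarrow> (u \<in> A \<longleftrightarrow> v \<notin> A)"
    using assms unfolding BIP_def bipartite_def by blast
  then have "bipartition n E ({0..<n} \<inter> A) ({0..<n} - A)"
    unfolding bipartition_def by blast
  then show thesis by (rule that)
qed

lemma simple_graph_sym: "simple_graph n E \<Longrightarrow> E u v \<Longrightarrow> E v u"
  unfolding simple_graph_def by blast

lemma simple_graph_edge: "simple_graph n E \<Longrightarrow> E u v \<Longrightarrow> u < n \<and> v < n \<and> u \<noteq> v"
  unfolding simple_graph_def by blast

definition dense_or_sparse :: "nat \<Rightarrow> (nat \<Rightarrow> nat \<Rightarrow> bool) \<Rightarrow> nat \<Rightarrow> nat \<Rightarrow> nat \<Rightarrow> bool" where
  "dense_or_sparse n E k i j \<longleftrightarrow> (\<exists>S. k_dense_set n E k i S) \<or> (\<exists>S. k_sparse_set n E k j S)"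

definition restrict_graph :: "nat \<Rightarrow> (nat \<Rightarrow> nat \<Rightarrow> bool) \<Rightarrow> nat \<Rightarrow> nat \<Rightarrow> bool" where
  "restrict_graph m E u v \<longleftrightarrow> E u v \<and> u < m \<and> v < m"

lemma BIP_restrict_graph: "BIP n E \<Longrightarrow> BIP m (restrict_graph m E)"
  unfolding BIP_def simple_graph_def bipartite_def restrict_graph_def by blast

lemma dense_or_sparse_restrict_graph:
  assumes "m \<le> n" and "dense_or_sparse m (restrict_graph m E) k i j"
  shows "dense_or_sparse n E k i j"
proof -
  have same_nbrs: "{u\<in>S. restrict_graph m E v u} = {u\<in>S. E v u}"
    "{u\<in>S. compl_graph m (restrict_graph m E) v u} = {u\<in>S. compl_graph n E v u}"
    if "S \<subseteq> {0..<m}" "v \<in> S" for S v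
    using that assms(1) by (auto simp: restrict_graph_def compl_graph_def)
  have "k_sparse_set n E k j S" if "k_sparse_set m (restrict_graph m E) k j S" for S
    using that same_nbrs(1) assms(1) unfolding k_sparse_set_def by auto
  moreover have "k_dense_set n E k i S" if "k_dense_set m (restrict_graph m E) k i S" for S
    using that same_nbrs(2) assms(1) unfolding k_dense_set_def k_sparse_set_def by auto
  ultimately show ?thesis
    using assms(2) unfolding dense_or_sparse_def by blast
qed

lemma ramsey_num_eqI:
  assumes hereditary: "\<And>n m E. G n E \<Longrightarrow> G m (restrict_graph m E)"
    and "\<And>E. G R E \<Longrightarrow> dense_or_sparse R E k i j"
    and "G (R - 1) E\<^sub>0" and "\<not> dense_or_sparse (R - 1) E\<^sub>0 k i j"
  shows "ramsey_num G k i j = R"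
  unfolding ramsey_num_def
proof (rule Least_equality)
  show "\<forall>E. G R E \<longrightarrow> (\<exists>S. k_dense_set R E k i S) \<or> (\<exists>S. k_sparse_set R E k j S)"
    using assms(2) unfolding dense_or_sparse_def by blast
next
  fix m
  assume "\<forall>E. G m E \<longrightarrow> (\<exists>S. k_dense_set m E k i S) \<or> (\<exists>S. k_sparse_set m E k j S)"
  then have "dense_or_sparse m (restrict_graph m E\<^sub>0) k i j"
    using hereditary[OF assms(3)] unfolding dense_or_sparse_def by blast
  then have "\<not> m \<le> R - 1"
    using dense_or_sparse_restrict_graph[of m "R - 1"] assms(4) by blast
  then show "R \<le> m" by simp
qed

section \<open>Four-cycles and 1-dense 4-sets\<close>

definition nbhd :: "(nat \<Rightarrow> nat \<Rightarrow> bool) \<Rightarrow> nat set \<Rightarrow> nat \<Rightarrow> nat set" where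
  "nbhd E X y = {x\<in>X. E x y}"

lemma nbhd_subset: "nbhd E X y \<subseteq> X"
  unfolding nbhd_def by blast

lemma finite_nbhd: "finite X \<Longrightarrow> finite (nbhd E X y)"
  unfolding nbhd_def by simp

lemma card_nbhd_le: "finite X \<Longrightarrow> card (nbhd E X y) \<le> card X"
  by (rule card_mono[OF _ nbhd_subset])

definition c4_free :: "(nat \<Rightarrow> nat \<Rightarrow> bool) \<Rightarrow> nat set \<Rightarrow> nat set \<Rightarrow> bool" where
  "c4_free E X Y \<longleftrightarrow> (\<forall>y\<in>Y. \<forall>y'\<in>Y. y \<noteq> y' \<longrightarrow> card (nbhd E X y \<inter> nbhd E X y') \<le> 1)"

lemma c4_freeD:
  "c4_free E X Y \<Longrightarrow> y \<in> Y \<Longrightarrow> y' \<in> Y \<Longrightarrow> y \<noteq> y' \<Longrightarrow> card (nbhd E X y \<inter> nbhd E X y') \<le> 1"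
  unfolding c4_free_def by blast

lemma bipartition_mem_iff: "bipartition n E X Y \<Longrightarrow> v < n \<Longrightarrow> v \<in> X \<longleftrightarrow> v \<notin> Y"
  unfolding bipartition_def by auto

lemma bipartition_edge:
  assumes "bipartition n E X Y" and "simple_graph n E" and "E u v"
  shows "u \<in> X \<longleftrightarrow> v \<in> Y" "u \<in> Y \<longleftrightarrow> v \<in> X"
  using bipartition_mem_iff[OF assms(1)] simple_graph_edge[OF assms(2,3)]
    bipartition_no_edge[OF assms(1)] assms(3) by blast+

text \<open>In the complement of a 4-cycle every vertex is adjacent only to its opposite vertex.\<close>

lemma dense_set_of_C4:
  assumes "bipartition n E X Y" and "x \<in> X" "x' \<in> X" "x \<noteq> x'" and "y \<in> Y" "y' \<in> Y" "y \<noteq> y'"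
    and "E x y" "E x y'" "E x' y" "E x' y'" and "simple_graph n E"
  shows "k_dense_set n E 1 4 {x, x', y, y'}"
proof -
  have XY: "X \<inter> Y = {}" "X \<union> Y = {0..<n}"
    using assms(1) unfolding bipartition_def by blast+
  have sym_edges: "E y x" "E y' x" "E y x'" "E y' x'"
    using simple_graph_sym[OF assms(12)] assms(8-11) by blast+
  have "x \<noteq> y" "x \<noteq> y'" "x' \<noteq> y" "x' \<noteq> y'"
    using XY(1) assms(2,3,5,6) by blast+
  then have "card {x, x', y, y'} = 4"
    using assms(4,7) by simp
  moreover have "{x, x', y, y'} \<subseteq> {0..<n}"
    using XY(2) assms(2,3,5,6) by blast
  moreover have "\<forall>v\<in>{x, x', y, y'}. card {u\<in>{x, x', y, y'}. compl_graph n E v u} \<le> 1"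
  proof -
    have partner: "card {u\<in>{x, x', y, y'}. compl_graph n E v u} \<le> 1"
      if "\<forall>u\<in>{x, x', y, y'} - {w}. u = v \<or> E v u" for v w
    proof -
      have "{u\<in>{x, x', y, y'}. compl_graph n E v u} \<subseteq> {w}"
        using that by (auto simp: compl_graph_def)
      then show ?thesis by (rule card_le_1_if_subset_singleton)
    qed
    show ?thesis
      using partner[of x x'] partner[of x' x] partner[of y y'] partner[of y' y] assms(8-11) sym_edges
      by auto
  qed
  ultimately show ?thesis
    unfolding k_dense_set_def k_sparse_set_def by blast
qed

lemma C4_of_dense_set:
  assumes "simple_graph n E" and "bipartition n E X Y" and "k_dense_set n E 1 4 S"
  obtains v w a b where "v \<noteq> w" "a \<noteq> b" "E v a" "E w a" "E v b" "E w b"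
proof -
  have S: "S \<subseteq> {0..<n}" "card S = 4" "\<forall>v\<in>S. card {u\<in>S. compl_graph n E v u} \<le> 1"
    using assms(3) unfolding k_dense_set_def k_sparse_set_def by auto
  have finS: "finite S"
    using S(1) finite_subset by blast
  have no_triangle: "\<not> (E p q \<and> E q r \<and> E p r)" for p q r
  proof
    assume pqr: "E p q \<and> E q r \<and> E p r"
    then have "q \<in> Y \<longleftrightarrow> r \<in> Y" "q \<in> Y \<longleftrightarrow> r \<in> X"
      using bipartition_edge[OF assms(2,1)] by blast+
    moreover have "r \<in> X \<longleftrightarrow> r \<notin> Y"
      using pqr simple_graph_edge[OF assms(1)] bipartition_mem_iff[OF assms(2)] by blast
    ultimately show False by blast
  qed
  have irrefl: "\<not> E p p" for p
    using simple_graph_edge[OF assms(1)] by blast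
  have two_nbrs: "2 \<le> card {u\<in>S. E v u}" if "v \<in> S" for v
  proof -
    have "S - {v} \<subseteq> {u\<in>S. compl_graph n E v u} \<union> {u\<in>S. E v u}"
      using S(1) that by (auto simp: compl_graph_def)
    then have "card (S - {v}) \<le> card ({u\<in>S. compl_graph n E v u} \<union> {u\<in>S. E v u})"
      by (intro card_mono) (use finS in auto)
    also have "\<dots> \<le> card {u\<in>S. compl_graph n E v u} + card {u\<in>S. E v u}"
      by (rule card_Un_le)
    finally show ?thesis
      using S(2,3) that finS by fastforce
  qed
  obtain v where v: "v \<in> S"
    using S(2) by fastforce
  obtain a b where ab: "a \<in> S" "b \<in> S" "a \<noteq> b" "E v a" "E v b"
    using two_nbrs[OF v] by (auto elim: two_elements_if_card_ge_2)
  have "v \<noteq> a" "v \<noteq> b"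
    using ab irrefl by metis+
  then have "card (S - {v, a, b}) = 1"
    using ab v S(2) finS by (simp add: card_Diff_subset)
  then obtain w where w: "S - {v, a, b} = {w}"
    by (rule card_1_singletonE)
  obtain c d where cd: "c \<in> S" "d \<in> S" "c \<noteq> d" "E w c" "E w d"
    using two_nbrs[of w] w by (auto elim: two_elements_if_card_ge_2)
  have "c \<noteq> w" "d \<noteq> w"
    using cd irrefl by metis+
  moreover have "S - {w} \<subseteq> {v, a, b}"
    using w by blast
  ultimately have "c \<in> {v, a, b}" "d \<in> {v, a, b}"
    using cd(1,2) by blast+
  moreover have "\<not> E w v"
    using no_triangle[of w v a] no_triangle[of w v b] ab cd calculation by blast
  ultimately have "E w a" "E w b"
    using cd by auto
  moreover have "v \<noteq> w"
    using w by blast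
  ultimately show thesis
    using that ab by blast
qed

lemma c4_free_iff_no_dense_set:
  assumes "simple_graph n E" and "bipartition n E X Y"
  shows "c4_free E X Y \<longleftrightarrow> \<not> (\<exists>S. k_dense_set n E 1 4 S)"
proof
  assume c4: "c4_free E X Y"
  show "\<not> (\<exists>S. k_dense_set n E 1 4 S)"
  proof
    assume "\<exists>S. k_dense_set n E 1 4 S"
    then obtain v w a b where C4: "v \<noteq> w" "a \<noteq> b" "E v a" "E w a" "E v b" "E w b"
      using C4_of_dense_set[OF assms] by blast
    note edge = bipartition_edge[OF assms(2,1)]
    have "\<exists>y\<in>Y. \<exists>y'\<in>Y. y \<noteq> y' \<and> 2 \<le> card (nbhd E X y \<inter> nbhd E X y')"
    proof (cases "v \<in> Y")
      case True
      then have "a \<in> X" "b \<in> X" "w \<in> Y"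
        using edge(2)[OF C4(3)] edge(2)[OF C4(5)] edge(2)[OF C4(4)] by blast+
      moreover have "{a, b} \<subseteq> nbhd E X v \<inter> nbhd E X w"
        using C4 calculation simple_graph_sym[OF assms(1)] unfolding nbhd_def by blast
      ultimately show ?thesis
        using C4 True card_mono[OF _ \<open>{a, b} \<subseteq> _\<close>] finite_nbhd bipartition_finite[OF assms(2)]
        by (metis card_2_iff finite_Int)
    next
      case False
      then have "v \<in> X"
        using C4(3) simple_graph_edge[OF assms(1)] bipartition_mem_iff[OF assms(2)] by blast
      then have "v \<in> X" "w \<in> X" "a \<in> Y" "b \<in> Y"
        using edge(1)[OF C4(3)] edge(1)[OF C4(5)] edge(1)[OF C4(4)] by blast+
      moreover have "{v, w} \<subseteq> nbhd E X a \<inter> nbhd E X b"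
        using C4 calculation unfolding nbhd_def by blast
      ultimately show ?thesis
        using C4 card_mono[OF _ \<open>{v, w} \<subseteq> _\<close>] finite_nbhd bipartition_finite[OF assms(2)]
        by (metis card_2_iff finite_Int)
    qed
    with c4 show False
      unfolding c4_free_def by fastforce
  qed
next
  assume no_dense: "\<not> (\<exists>S. k_dense_set n E 1 4 S)"
  show "c4_free E X Y"
    unfolding c4_free_def
  proof (intro ballI impI)
    fix y y' assume y: "y \<in> Y" "y' \<in> Y" "y \<noteq> y'"
    show "card (nbhd E X y \<inter> nbhd E X y') \<le> 1"
    proof (rule ccontr)
      assume "\<not> ?thesis"
      then have "2 \<le> card (nbhd E X y \<inter> nbhd E X y')"
        by simp
      then obtain x x' where "x \<in> nbhd E X y \<inter> nbhd E X y'" "x' \<in> nbhd E X y \<inter> nbhd E X y'" "x \<noteq> x'"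
        by (auto elim: two_elements_if_card_ge_2)
      then have "k_dense_set n E 1 4 {x, x', y, y'}"
        using dense_set_of_C4[OF assms(2) _ _ _ y] assms(1) unfolding nbhd_def by blast
      with no_dense show False by blast
    qed
  qed
qed

section \<open>1-sparse sets and their traces\<close>

definition untouched :: "(nat \<Rightarrow> nat \<Rightarrow> bool) \<Rightarrow> nat set \<Rightarrow> nat set \<Rightarrow> nat set" where
  "untouched E X T = {x\<in>X. \<forall>y\<in>T. \<not> E x y}"

definition privately_reached :: "(nat \<Rightarrow> nat \<Rightarrow> bool) \<Rightarrow> nat set \<Rightarrow> nat set \<Rightarrow> nat set" where
  "privately_reached E X T = {y\<in>T. \<exists>x\<in>X. E x y \<and> (\<forall>y'\<in>T. E x y' \<longrightarrow> y' = y)}"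

text \<open>The size of a largest 1-sparse set meeting the side \<open>Y \<supseteq> T\<close> exactly in \<open>T\<close>: take \<open>T\<close>,
  all vertices of \<open>X\<close> without neighbours in \<open>T\<close>, and one private neighbour in \<open>X\<close> of each
  vertex of \<open>T\<close> that has one.\<close>

definition sparse_count :: "(nat \<Rightarrow> nat \<Rightarrow> bool) \<Rightarrow> nat set \<Rightarrow> nat set \<Rightarrow> nat" where
  "sparse_count E X T = card T + card (untouched E X T) + card (privately_reached E X T)"

lemma sparse_count_empty: "sparse_count E X {} = card X"
  unfolding sparse_count_def untouched_def privately_reached_def by simp

lemma k_sparse_set_subset:
  assumes "S \<subseteq> {0..<n}" and "j \<le> card S" and "\<forall>v\<in>S. card {u\<in>S. E v u} \<le> k"
  shows "\<exists>S'. k_sparse_set n E k j S'"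
proof -
  obtain S' where S': "S' \<subseteq> S" "card S' = j"
    using obtain_subset_with_card_n[OF assms(2)] by blast
  have "finite S"
    using assms(1) finite_subset by blast
  then have "card {u\<in>S'. E v u} \<le> card {u\<in>S. E v u}" for v
    using S'(1) by (intro card_mono) auto
  then have "\<forall>v\<in>S'. card {u\<in>S'. E v u} \<le> k"
    using assms(3) S'(1) by (meson le_trans subsetD)
  then show ?thesis
    using assms(1) S' unfolding k_sparse_set_def by blast
qed

lemma sparse_set_of_sparse_count:
  assumes "simple_graph n E" and "bipartition n E X Y" and "T \<subseteq> Y"
    and "j \<le> sparse_count E X T"
  shows "\<exists>S. k_sparse_set n E 1 j S"
proof -
  define U where "U = untouched E X T"
  define P where "P = privately_reached E X T"
  define c where "c y = (SOME x. x \<in> X \<and> E x y \<and> (\<forall>y'\<in>T. E x y' \<longrightarrow> y' = y))" for y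
  have c: "c y \<in> X" "E (c y) y" "\<And>y'. y' \<in> T \<Longrightarrow> E (c y) y' \<Longrightarrow> y' = y" if "y \<in> P" for y
  proof -
    from that obtain x where "x \<in> X \<and> E x y \<and> (\<forall>y'\<in>T. E x y' \<longrightarrow> y' = y)"
      unfolding P_def privately_reached_def by blast
    then have "c y \<in> X \<and> E (c y) y \<and> (\<forall>y'\<in>T. E (c y) y' \<longrightarrow> y' = y)"
      unfolding c_def by (rule someI)
    then show "c y \<in> X" "E (c y) y" "\<And>y'. y' \<in> T \<Longrightarrow> E (c y) y' \<Longrightarrow> y' = y"
      by blast+
  qed
  note no_edge = bipartition_no_edge[OF assms(2)]
  note sym = simple_graph_sym[OF assms(1)]
  have XY: "X \<subseteq> {0..<n}" "Y \<subseteq> {0..<n}" "X \<inter> Y = {}"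
    using assms(2) unfolding bipartition_def by auto
  have PT: "P \<subseteq> T" and UX: "U \<subseteq> X"
    unfolding P_def privately_reached_def U_def untouched_def by auto
  have fin: "finite T" "finite U" "finite P"
    using XY(1,2) assms(3) PT UX finite_subset by (metis finite_atLeastLessThan)+
  have "inj_on c P"
    using c(2,3) PT by (metis inj_onI subsetD)
  then have card_cP: "card (c ` P) = card P"
    by (rule card_image)
  have cP_not_U: "c ` P \<inter> U = {}"
    using c(2) PT unfolding U_def untouched_def by blast
  define S where "S = T \<union> U \<union> c ` P"
  have "card S = card T + card U + card P"
  proof -
    have "T \<inter> U = {}" "(T \<union> U) \<inter> c ` P = {}"
      using assms(3) UX XY(3) c(1) cP_not_U by blast+
    then show ?thesis
      unfolding S_def using fin card_cP by (simp add: card_Un_disjoint)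
  qed
  moreover have "S \<subseteq> {0..<n}"
    unfolding S_def using assms(3) UX c(1) XY by blast
  moreover have "card {u\<in>S. E v u} \<le> 1" if v: "v \<in> S" for v
  proof -
    consider (T) "v \<in> T" | (U) "v \<in> U" | (P) y where "y \<in> P" "v = c y"
      using v unfolding S_def by blast
    then show ?thesis
    proof cases
      case T
      have "{u\<in>S. E v u} \<subseteq> {c v}"
      proof
        fix u assume u: "u \<in> {u\<in>S. E v u}"
        then have "u \<notin> T \<union> U"
          using T no_edge(2) assms(3) sym unfolding U_def untouched_def by blast
        then obtain y where y: "y \<in> P" "u = c y"
          using u unfolding S_def by blast
        then have "v = y"
          using c(3)[OF y(1) T] u sym by blast
        then show "u \<in> {c v}"
          using y by simp
      qed
      then show ?thesis by (rule card_le_1_if_subset_singleton)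
    next
      case U
      then have "{u\<in>S. E v u} = {}"
        using UX c(1) no_edge(1) sym unfolding S_def U_def untouched_def by blast
      then show ?thesis by (simp only: card.empty)
    next
      case P
      have "{u\<in>S. E v u} \<subseteq> {y}"
        using P c(1,3) UX no_edge(1) unfolding S_def by blast
      then show ?thesis by (rule card_le_1_if_subset_singleton)
    qed
  qed
  ultimately show ?thesis
    using k_sparse_set_subset[of S n j] assms(4)
    unfolding sparse_count_def U_def P_def by auto
qed

lemma card_le_sparse_count:
  assumes "simple_graph n E" and "bipartition n E X Y"
    and "S \<subseteq> {0..<n}" and "\<forall>v\<in>S. card {u\<in>S. E v u} \<le> 1"
  shows "card S \<le> sparse_count E X (S \<inter> Y)"
proof -
  define T where "T = S \<inter> Y"
  have finS: "finite S"
    using assms(3) finite_subset by blast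
  have finX: "finite X"
    using bipartition_finite[OF assms(2)] by blast
  have unique_nbr: "y = y'" if "x \<in> S" "y \<in> S" "y' \<in> S" "E x y" "E x y'" for x y y'
  proof (rule ccontr)
    assume "y \<noteq> y'"
    then have "card {y, y'} \<le> card {u\<in>S. E x u}"
      using finS that by (intro card_mono) auto
    then show False
      using assms(4) that \<open>y \<noteq> y'\<close> by fastforce
  qed
  define A1 where "A1 = {x \<in> S \<inter> X. \<forall>y\<in>T. \<not> E x y}"
  define A2 where "A2 = {x \<in> S \<inter> X. \<exists>y\<in>T. E x y}"
  define g where "g x = (SOME y. y \<in> T \<and> E x y)" for x
  have g: "g x \<in> T" "E x (g x)" if "x \<in> A2" for x
  proof -
    from that obtain y where "y \<in> T \<and> E x y"
      unfolding A2_def by blast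
    then have "g x \<in> T \<and> E x (g x)"
      unfolding g_def by (rule someI)
    then show "g x \<in> T" "E x (g x)" by blast+
  qed
  have "g x \<in> privately_reached E X T" if "x \<in> A2" for x
  proof -
    have "x \<in> X" "x \<in> S"
      using that unfolding A2_def by auto
    moreover have "\<forall>y'\<in>T. E x y' \<longrightarrow> y' = g x"
      using unique_nbr[of x] g[OF that] \<open>x \<in> S\<close> unfolding T_def by blast
    ultimately show ?thesis
      unfolding privately_reached_def using g[OF that] by blast
  qed
  then have "g ` A2 \<subseteq> privately_reached E X T"
    by blast
  moreover have "inj_on g A2"
  proof (rule inj_onI)
    fix x x' assume x: "x \<in> A2" "x' \<in> A2" "g x = g x'"
    then have "E (g x) x" "E (g x) x'" "g x \<in> S" "x \<in> S" "x' \<in> S"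
      using g[OF x(1)] g[OF x(2)] simple_graph_sym[OF assms(1)] unfolding A2_def T_def by auto
    then show "x = x'"
      using unique_nbr by blast
  qed
  moreover have "finite (privately_reached E X T)"
    using finS unfolding T_def privately_reached_def by simp
  ultimately have "card A2 \<le> card (privately_reached E X T)"
    by (intro card_inj_on_le)
  moreover have "card A1 \<le> card (untouched E X T)"
    using finX by (intro card_mono) (auto simp: A1_def untouched_def)
  moreover have "S = T \<union> A1 \<union> A2"
    unfolding T_def A1_def A2_def using assms(2,3) unfolding bipartition_def by auto
  then have "card S \<le> card T + card A1 + card A2"
    by (metis card_Un_le add_le_mono1 le_trans)
  ultimately show ?thesis
    unfolding sparse_count_def T_def by linarith
qed

lemma untouched_eq: "untouched E X T = X - (\<Union>y\<in>T. nbhd E X y)"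
  unfolding untouched_def nbhd_def by blast

lemma privately_reachedI:
  assumes "y \<in> T" and "x \<in> nbhd E X y" and "\<And>y'. y' \<in> T \<Longrightarrow> y' \<noteq> y \<Longrightarrow> x \<notin> nbhd E X y'"
  shows "y \<in> privately_reached E X T"
  using assms unfolding privately_reached_def nbhd_def by blast

lemma privately_reached_subset: "privately_reached E X T \<subseteq> T"
  unfolding privately_reached_def by blast

lemma sparse_count_eq:
  assumes "finite X" and "finite T"
  shows "sparse_count E X T =
    card T + (card X - card (\<Union>y\<in>T. nbhd E X y)) + card (privately_reached E X T)"
proof -
  have "(\<Union>y\<in>T. nbhd E X y) \<subseteq> X"
    using nbhd_subset by blast
  then show ?thesis
    unfolding sparse_count_def untouched_eq using assms by (simp add: card_Diff_subset finite_subset)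
qed

lemma card_privately_reached_ge:
  assumes "finite T" and "A \<subseteq> privately_reached E X T"
  shows "card A \<le> card (privately_reached E X T)"
  using assms privately_reached_subset by (metis card_mono finite_subset)

lemma sparse_count_gain_singleton:
  assumes "finite X" and "card (nbhd E X y) \<le> 1"
  shows "card X < sparse_count E X {y}"
proof (cases "nbhd E X y = {}")
  case True
  then show ?thesis
    using sparse_count_eq[OF assms(1)] by simp
next
  case False
  then obtain x where "x \<in> nbhd E X y" by blast
  then have "y \<in> privately_reached E X {y}"
    by (intro privately_reachedI) auto
  moreover have "card (nbhd E X y) \<noteq> 0"
    using False finite_nbhd[OF assms(1)] by simp
  then have "card (nbhd E X y) = 1"
    using assms(2) by simp
  moreover note card_nbhd_le[OF assms(1), of E y]
  ultimately show ?thesis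
    using sparse_count_eq[OF assms(1)] card_privately_reached_ge[of "{y}" "{y}" E X] by simp
qed

lemma sparse_count_gain_pair:
  assumes "finite X" and "y\<^sub>1 \<noteq> y\<^sub>2"
    and "card (nbhd E X y\<^sub>1) = 2" and "card (nbhd E X y\<^sub>2) = 2"
    and "card (nbhd E X y\<^sub>1 \<inter> nbhd E X y\<^sub>2) = 1"
  shows "card X < sparse_count E X {y\<^sub>1, y\<^sub>2}"
proof -
  define N\<^sub>1 where "N\<^sub>1 = nbhd E X y\<^sub>1"
  define N\<^sub>2 where "N\<^sub>2 = nbhd E X y\<^sub>2"
  have fin: "finite N\<^sub>1" "finite N\<^sub>2"
    unfolding N\<^sub>1_def N\<^sub>2_def using finite_nbhd[OF assms(1)] by blast+
  have union: "card (N\<^sub>1 \<union> N\<^sub>2) = 3"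
    using card_Un_Int[OF fin] assms(3-5) unfolding N\<^sub>1_def N\<^sub>2_def by simp
  moreover have "card (N\<^sub>1 \<union> N\<^sub>2) \<le> card X"
    unfolding N\<^sub>1_def N\<^sub>2_def using assms(1) nbhd_subset by (intro card_mono) auto
  moreover have "{y\<^sub>1, y\<^sub>2} \<subseteq> privately_reached E X {y\<^sub>1, y\<^sub>2}"
  proof -
    have "N\<^sub>1 \<inter> N\<^sub>2 \<noteq> N\<^sub>1" "N\<^sub>1 \<inter> N\<^sub>2 \<noteq> N\<^sub>2"
      using assms(3-5) unfolding N\<^sub>1_def N\<^sub>2_def by auto
    then obtain x\<^sub>1 x\<^sub>2 where "x\<^sub>1 \<in> N\<^sub>1 - N\<^sub>2" "x\<^sub>2 \<in> N\<^sub>2 - N\<^sub>1"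
      by blast
    then show ?thesis
      unfolding N\<^sub>1_def N\<^sub>2_def by (auto intro!: privately_reachedI)
  qed
  then have "card {y\<^sub>1, y\<^sub>2} \<le> card (privately_reached E X {y\<^sub>1, y\<^sub>2})"
    by (rule card_privately_reached_ge[rotated]) simp
  then have "2 \<le> card (privately_reached E X {y\<^sub>1, y\<^sub>2})"
    using assms(2) by simp
  ultimately show ?thesis
    using sparse_count_eq[OF assms(1)] assms(2) unfolding N\<^sub>1_def N\<^sub>2_def by simp
qed

lemma sparse_count_gain_triple:
  assumes "finite X" and "y\<^sub>1 \<noteq> y\<^sub>2" "y\<^sub>1 \<noteq> y\<^sub>3" "y\<^sub>2 \<noteq> y\<^sub>3"
    and "card (nbhd E X y\<^sub>1) = 2" and "card (nbhd E X y\<^sub>2) = 2"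
    and "nbhd E X y\<^sub>1 \<inter> nbhd E X y\<^sub>2 = {}"
    and "card (nbhd E X y\<^sub>1 \<inter> nbhd E X y\<^sub>3) \<le> 1" and "card (nbhd E X y\<^sub>2 \<inter> nbhd E X y\<^sub>3) \<le> 1"
    and "card (nbhd E X y\<^sub>3 - (nbhd E X y\<^sub>1 \<union> nbhd E X y\<^sub>2)) \<le> 1"
  shows "card X < sparse_count E X {y\<^sub>1, y\<^sub>2, y\<^sub>3}"
proof -
  define N\<^sub>1 where "N\<^sub>1 = nbhd E X y\<^sub>1"
  define N\<^sub>2 where "N\<^sub>2 = nbhd E X y\<^sub>2"
  define N\<^sub>3 where "N\<^sub>3 = nbhd E X y\<^sub>3"
  define K where "K = N\<^sub>3 - (N\<^sub>1 \<union> N\<^sub>2)"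
  have fin: "finite N\<^sub>1" "finite N\<^sub>2" "finite N\<^sub>3"
    unfolding N\<^sub>1_def N\<^sub>2_def N\<^sub>3_def using finite_nbhd[OF assms(1)] by blast+
  have union: "(\<Union>y\<in>{y\<^sub>1, y\<^sub>2, y\<^sub>3}. nbhd E X y) = (N\<^sub>1 \<union> N\<^sub>2) \<union> K"
    unfolding N\<^sub>1_def N\<^sub>2_def N\<^sub>3_def K_def by blast
  have "card (N\<^sub>1 \<union> N\<^sub>2) = 4"
    using fin assms(5-7) unfolding N\<^sub>1_def N\<^sub>2_def by (simp add: card_Un_disjoint)
  moreover have "card ((N\<^sub>1 \<union> N\<^sub>2) \<union> K) = card (N\<^sub>1 \<union> N\<^sub>2) + card K"
    by (rule card_Un_disjoint) (use fin in \<open>auto simp: K_def\<close>)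
  ultimately have card_union: "card ((N\<^sub>1 \<union> N\<^sub>2) \<union> K) = 4 + card K"
    by simp
  have union_le: "card ((N\<^sub>1 \<union> N\<^sub>2) \<union> K) \<le> card X"
    unfolding N\<^sub>1_def N\<^sub>2_def N\<^sub>3_def K_def using assms(1) nbhd_subset by (intro card_mono) auto
  have private_nbr: "\<exists>x. x \<in> N - N\<^sub>3" if "card N = 2" "card (N \<inter> N\<^sub>3) \<le> 1" for N
  proof (rule ccontr)
    assume "\<nexists>x. x \<in> N - N\<^sub>3"
    then have "N \<inter> N\<^sub>3 = N" by blast
    then show False using that by simp
  qed
  have y12: "{y\<^sub>1, y\<^sub>2} \<subseteq> privately_reached E X {y\<^sub>1, y\<^sub>2, y\<^sub>3}"
  proof -
    obtain x\<^sub>1 x\<^sub>2 where "x\<^sub>1 \<in> N\<^sub>1 - N\<^sub>3" "x\<^sub>2 \<in> N\<^sub>2 - N\<^sub>3"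
      using private_nbr assms(5,6,8,9) unfolding N\<^sub>1_def N\<^sub>2_def N\<^sub>3_def by blast
    moreover have "x\<^sub>1 \<notin> N\<^sub>2" "x\<^sub>2 \<notin> N\<^sub>1"
      using calculation assms(7) unfolding N\<^sub>1_def N\<^sub>2_def by blast+
    ultimately show ?thesis
      unfolding N\<^sub>1_def N\<^sub>2_def N\<^sub>3_def by (auto intro!: privately_reachedI)
  qed
  have y3: "y\<^sub>3 \<in> privately_reached E X {y\<^sub>1, y\<^sub>2, y\<^sub>3}" if "K \<noteq> {}"
    using that unfolding K_def N\<^sub>1_def N\<^sub>2_def N\<^sub>3_def by (auto intro!: privately_reachedI)
  have "2 + card K \<le> card (privately_reached E X {y\<^sub>1, y\<^sub>2, y\<^sub>3})"
  proof (cases "K = {}")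
    case True
    then show ?thesis
      using card_privately_reached_ge[OF _ y12] assms(2) by simp
  next
    case False
    then have "card K \<noteq> 0"
      using fin(3) unfolding K_def by simp
    then have "card K = 1"
      using assms(10) unfolding K_def N\<^sub>1_def N\<^sub>2_def N\<^sub>3_def by simp
    moreover have "card {y\<^sub>1, y\<^sub>2, y\<^sub>3} \<le> card (privately_reached E X {y\<^sub>1, y\<^sub>2, y\<^sub>3})"
      using y12 y3[OF False] by (intro card_privately_reached_ge) auto
    ultimately show ?thesis
      using assms(2-4) by simp
  qed
  then show ?thesis
    using sparse_count_eq[OF assms(1)] card_union union_le union assms(2-4) by simp
qed

lemma two_le_card_nbhd_if_no_gain:
  assumes "finite X" and "\<forall>T\<subseteq>Y. sparse_count E X T \<le> card X" and "y \<in> Y"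
  shows "2 \<le> card (nbhd E X y)"
proof (rule ccontr)
  assume "\<not> ?thesis"
  then have "card X < sparse_count E X {y}"
    by (intro sparse_count_gain_singleton[OF assms(1)]) simp
  moreover have "sparse_count E X {y} \<le> card X"
    using assms(2,3) by simp
  ultimately show False by simp
qed

lemma disjoint_nbhds_if_no_gain:
  assumes "finite X" and "\<forall>T\<subseteq>Y. sparse_count E X T \<le> card X" and "c4_free E X Y"
    and "y\<^sub>1 \<in> Y" "y\<^sub>2 \<in> Y" "y\<^sub>1 \<noteq> y\<^sub>2"
    and "card (nbhd E X y\<^sub>1) = 2" "card (nbhd E X y\<^sub>2) = 2"
  shows "nbhd E X y\<^sub>1 \<inter> nbhd E X y\<^sub>2 = {}"
proof (rule ccontr)
  assume "nbhd E X y\<^sub>1 \<inter> nbhd E X y\<^sub>2 \<noteq> {}"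
  then have "card (nbhd E X y\<^sub>1 \<inter> nbhd E X y\<^sub>2) \<noteq> 0"
    using finite_nbhd[OF assms(1)] by simp
  moreover have "card (nbhd E X y\<^sub>1 \<inter> nbhd E X y\<^sub>2) \<le> 1"
    by (rule c4_freeD[OF assms(3-6)])
  ultimately have "card X < sparse_count E X {y\<^sub>1, y\<^sub>2}"
    using sparse_count_gain_pair[OF assms(1,6-8)] by simp
  moreover have "sparse_count E X {y\<^sub>1, y\<^sub>2} \<le> card X"
    using assms(2,4,5) by simp
  ultimately show False by simp
qed

lemma sparse_gain_if_card_le_3:
  assumes "finite X" and "c4_free E X Y" and "card X \<le> 3" and "2 \<le> card Y"
  shows "\<exists>T\<subseteq>Y. card X < sparse_count E X T"
proof (rule ccontr)
  assume "\<not> ?thesis"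
  then have no_gain: "\<forall>T\<subseteq>Y. sparse_count E X T \<le> card X"
    by (simp add: not_less)
  from assms(4) obtain y\<^sub>1 y\<^sub>2 where y: "y\<^sub>1 \<in> Y" "y\<^sub>2 \<in> Y" "y\<^sub>1 \<noteq> y\<^sub>2"
    by (rule two_elements_if_card_ge_2)
  define N\<^sub>1 where "N\<^sub>1 = nbhd E X y\<^sub>1"
  define N\<^sub>2 where "N\<^sub>2 = nbhd E X y\<^sub>2"
  have fin: "finite N\<^sub>1" "finite N\<^sub>2"
    unfolding N\<^sub>1_def N\<^sub>2_def using finite_nbhd[OF assms(1)] by blast+
  have "card (N\<^sub>1 \<union> N\<^sub>2) \<le> 3"
    using card_mono[OF assms(1), of "N\<^sub>1 \<union> N\<^sub>2"] nbhd_subset assms(3)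
    unfolding N\<^sub>1_def N\<^sub>2_def by fastforce
  moreover have "card (N\<^sub>1 \<inter> N\<^sub>2) \<le> 1"
    unfolding N\<^sub>1_def N\<^sub>2_def by (rule c4_freeD[OF assms(2) y])
  moreover have "2 \<le> card N\<^sub>1" "2 \<le> card N\<^sub>2"
    using two_le_card_nbhd_if_no_gain[OF assms(1) no_gain] y(1,2)
    unfolding N\<^sub>1_def N\<^sub>2_def by blast+
  moreover note card_Un_Int[OF fin]
  ultimately have "card N\<^sub>1 = 2" "card N\<^sub>2 = 2" "card (N\<^sub>1 \<inter> N\<^sub>2) = 1"
    by linarith+
  then show False
    using disjoint_nbhds_if_no_gain[OF assms(1) no_gain assms(2) y]
    unfolding N\<^sub>1_def N\<^sub>2_def by simp
qed

text \<open>If \<open>y\<^sub>1, y\<^sub>2\<close> have disjoint neighbourhoods of size 2, at most two vertices of \<open>X\<close> remain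
  outside them; two further vertices of \<open>Y\<close> both adjacent to two of those would form a 4-cycle.\<close>

lemma third_vertex_with_few_new_nbrs:
  assumes "finite X" "finite Y" and "c4_free E X Y"
    and "y\<^sub>1 \<in> Y" "y\<^sub>2 \<in> Y" "y\<^sub>1 \<noteq> y\<^sub>2"
    and "card (nbhd E X y\<^sub>1 \<union> nbhd E X y\<^sub>2) = 4"
    and "(card X \<le> 5 \<and> 3 \<le> card Y) \<or> (card X = 6 \<and> 4 \<le> card Y)"
  shows "\<exists>y\<^sub>3\<in>Y - {y\<^sub>1, y\<^sub>2}. card (nbhd E X y\<^sub>3 - (nbhd E X y\<^sub>1 \<union> nbhd E X y\<^sub>2)) \<le> 1"
proof -
  define W where "W = X - (nbhd E X y\<^sub>1 \<union> nbhd E X y\<^sub>2)"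
  have finW: "finite W"
    unfolding W_def using assms(1) by simp
  have new_sub: "nbhd E X y - (nbhd E X y\<^sub>1 \<union> nbhd E X y\<^sub>2) \<subseteq> W" for y
    unfolding W_def using nbhd_subset by blast
  have card_W: "card W = card X - 4"
    unfolding W_def using assms(1,7) nbhd_subset finite_nbhd[OF assms(1)] by (subst card_Diff_subset) auto
  have card_rest: "card (Y - {y\<^sub>1, y\<^sub>2}) = card Y - 2"
    using assms(2,4-6) by (simp add: card_Diff_subset)
  show ?thesis
  proof (cases "card X \<le> 5")
    case True
    then have "Y - {y\<^sub>1, y\<^sub>2} \<noteq> {}"
      using assms(8) card_rest by fastforce
    then obtain y\<^sub>3 where "y\<^sub>3 \<in> Y - {y\<^sub>1, y\<^sub>2}" by blast
    moreover have "card (nbhd E X y\<^sub>3 - (nbhd E X y\<^sub>1 \<union> nbhd E X y\<^sub>2)) \<le> card W"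
      by (rule card_mono[OF finW new_sub])
    then have "card (nbhd E X y\<^sub>3 - (nbhd E X y\<^sub>1 \<union> nbhd E X y\<^sub>2)) \<le> 1"
      using card_W True by linarith
    ultimately show ?thesis by blast
  next
    case False
    then have "card W = 2" "2 \<le> card (Y - {y\<^sub>1, y\<^sub>2})"
      using assms(8) card_W card_rest by auto
    from this(2) obtain y\<^sub>3 y\<^sub>4
      where y34: "y\<^sub>3 \<in> Y - {y\<^sub>1, y\<^sub>2}" "y\<^sub>4 \<in> Y - {y\<^sub>1, y\<^sub>2}" "y\<^sub>3 \<noteq> y\<^sub>4"
      by (rule two_elements_if_card_ge_2)
    show ?thesis
    proof (rule ccontr)
      assume "\<not> ?thesis"
      then have "nbhd E X y - (nbhd E X y\<^sub>1 \<union> nbhd E X y\<^sub>2) = W" if "y \<in> Y - {y\<^sub>1, y\<^sub>2}" for y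
        using that card_mono[OF finW new_sub] \<open>card W = 2\<close>
        by (metis card_subset_eq[OF finW new_sub] le_antisym not_less_eq_eq numeral_2_eq_2 One_nat_def)
      then have "W \<subseteq> nbhd E X y\<^sub>3 \<inter> nbhd E X y\<^sub>4"
        using y34 by blast
      then have "card W \<le> card (nbhd E X y\<^sub>3 \<inter> nbhd E X y\<^sub>4)"
        using finite_nbhd[OF assms(1)] by (intro card_mono) auto
      moreover have "card (nbhd E X y\<^sub>3 \<inter> nbhd E X y\<^sub>4) \<le> 1"
        using c4_freeD[OF assms(3)] y34 by blast
      ultimately show False
        using \<open>card W = 2\<close> by simp
    qed
  qed
qed

section \<open>Counting pairs of neighbours\<close>

text \<open>Each 2-subset of \<open>Z\<close> lies in at most one of the sets \<open>M i\<close>.\<close>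

lemma sum_choose_two_le_if_pairwise_meet_le_1:
  assumes "finite Z" and "finite I" and "\<And>i. i \<in> I \<Longrightarrow> M i \<subseteq> Z"
    and "\<And>i i'. i \<in> I \<Longrightarrow> i' \<in> I \<Longrightarrow> i \<noteq> i' \<Longrightarrow> card (M i \<inter> M i') \<le> 1"
  shows "(\<Sum>i\<in>I. card (M i) choose 2) \<le> card Z choose 2"
proof -
  define Q where "Q i = {s. s \<subseteq> M i \<and> card s = 2}" for i
  have finM: "finite (M i)" if "i \<in> I" for i
    using assms(1,3) that finite_subset by blast
  have "Q i \<inter> Q i' = {}" if "i \<in> I" "i' \<in> I" "i \<noteq> i'" for i i'
  proof (rule ccontr)
    assume "Q i \<inter> Q i' \<noteq> {}"
    then obtain s where s: "s \<subseteq> M i" "s \<subseteq> M i'" "card s = 2"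
      unfolding Q_def by blast
    then have "card s \<le> card (M i \<inter> M i')"
      using finM \<open>i \<in> I\<close> by (intro card_mono) auto
    then show False
      using assms(4)[OF that] s(3) by simp
  qed
  moreover have "finite (Q i)" if "i \<in> I" for i
    unfolding Q_def using finM[OF that] by (simp add: finite_subset[of _ "Pow (M i)"] subset_eq)
  ultimately have "(\<Sum>i\<in>I. card (Q i)) = card (\<Union>i\<in>I. Q i)"
    using assms(2) by (simp add: card_UN_disjoint)
  also have "\<dots> \<le> card {s. s \<subseteq> Z \<and> card s = 2}"
    using assms(1,3) unfolding Q_def by (intro card_mono) (auto simp: finite_subset[of _ "Pow Z"] subset_eq)
  finally show ?thesis
    using n_subsets[OF assms(1)] n_subsets[OF finM] unfolding Q_def by simp
qed

lemma sum_card_nbhd_swap: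
  assumes "finite X" and "finite Y" and "\<And>x y. E x y \<Longrightarrow> E y x"
  shows "(\<Sum>y\<in>Y. card (nbhd E X y)) = (\<Sum>x\<in>X. card (nbhd E Y x))"
proof -
  have count: "card (nbhd E A v) = (\<Sum>u\<in>A. if E u v then 1 else 0)" if "finite A" for A v
    unfolding nbhd_def using sum.inter_filter[OF that, of "\<lambda>_. 1::nat"] by simp
  have "(\<Sum>y\<in>Y. card (nbhd E X y)) = (\<Sum>y\<in>Y. \<Sum>x\<in>X. if E x y then 1 else 0)"
    using count[OF assms(1)] by simp
  also have "\<dots> = (\<Sum>x\<in>X. \<Sum>y\<in>Y. if E x y then 1 else 0)"
    by (rule sum.swap)
  also have "\<dots> = (\<Sum>x\<in>X. \<Sum>y\<in>Y. if E y x then 1 else 0)"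
    using assms(3) by (intro sum.cong refl) metis
  also have "\<dots> = (\<Sum>x\<in>X. card (nbhd E Y x))"
    using count[OF assms(2)] by simp
  finally show ?thesis .
qed

lemma double_le_choose_two_add_3: "2 * d \<le> (d choose 2) + 3"
proof -
  have "4 * d \<le> d * (d - 1) + 6"
  proof (cases "d \<le> 3")
    case True
    then have "d \<in> {0, 1, 2, 3}" by auto
    then show ?thesis by auto
  next
    case False
    then have "4 * (d - 1) \<le> d * (d - 1)"
      by (intro mult_right_mono) auto
    moreover have "4 * d = 4 * (d - 1) + 4"
      using False by simp
    ultimately show ?thesis by linarith
  qed
  then show ?thesis
    by (simp add: choose_two)
qed

lemma sum_ge_with_exceptions:
  fixes f :: "'a \<Rightarrow> nat"
  assumes "finite Y" and "\<And>y. y \<in> Y \<Longrightarrow> a \<le> f y" and "\<And>y. y \<in> Y \<Longrightarrow> \<not> P y \<Longrightarrow> a + c \<le> f y"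
  shows "(a + c) * card Y \<le> (\<Sum>y\<in>Y. f y) + c * card {y\<in>Y. P y}"
proof -
  define D where "D = {y\<in>Y. P y}"
  have D: "D \<subseteq> Y" "finite D"
    unfolding D_def using assms(1) by auto
  have "card (Y - D) * (a + c) \<le> (\<Sum>y\<in>Y - D. f y)"
    using sum_bounded_below[of "Y - D" "a + c" f] assms(3) unfolding D_def by auto
  moreover have "card D * a \<le> (\<Sum>y\<in>D. f y)"
    using sum_bounded_below[of D a f] assms(2) D(1) by auto
  moreover have "(\<Sum>y\<in>Y. f y) = (\<Sum>y\<in>Y - D. f y) + (\<Sum>y\<in>D. f y)"
    by (rule sum.subset_diff[OF D(1) assms(1)])
  moreover have "card Y = card (Y - D) + card D"
    using D assms(1) by (metis card_Diff_subset card_mono le_add_diff_inverse2)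
  ultimately show ?thesis
    unfolding D_def[symmetric] by (simp add: algebra_simps)
qed

section \<open>Upper bounds\<close>

lemma card_degree_two_le_1_if_no_gain:
  assumes "finite X" "finite Y" and "c4_free E X Y"
    and no_gain: "\<forall>T\<subseteq>Y. sparse_count E X T \<le> card X"
    and "(card X \<le> 5 \<and> 3 \<le> card Y) \<or> (card X = 6 \<and> 4 \<le> card Y)"
  shows "card {y\<in>Y. card (nbhd E X y) = 2} \<le> 1"
proof (rule ccontr)
  assume "\<not> ?thesis"
  then have "2 \<le> card {y\<in>Y. card (nbhd E X y) = 2}"
    by simp
  then obtain y\<^sub>1 y\<^sub>2 where y: "y\<^sub>1 \<in> Y" "y\<^sub>2 \<in> Y" "y\<^sub>1 \<noteq> y\<^sub>2"
      and deg: "card (nbhd E X y\<^sub>1) = 2" "card (nbhd E X y\<^sub>2) = 2"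
    by (rule two_elements_if_card_ge_2) blast
  have disj: "nbhd E X y\<^sub>1 \<inter> nbhd E X y\<^sub>2 = {}"
    by (rule disjoint_nbhds_if_no_gain[OF assms(1) no_gain assms(3) y deg])
  then have "card (nbhd E X y\<^sub>1 \<union> nbhd E X y\<^sub>2) = 4"
    using deg finite_nbhd[OF assms(1)] by (simp add: card_Un_disjoint)
  then obtain y\<^sub>3 where y\<^sub>3: "y\<^sub>3 \<in> Y - {y\<^sub>1, y\<^sub>2}"
      and few_new: "card (nbhd E X y\<^sub>3 - (nbhd E X y\<^sub>1 \<union> nbhd E X y\<^sub>2)) \<le> 1"
    using third_vertex_with_few_new_nbrs[OF assms(1-3) y _ assms(5)] by blast
  have "card (nbhd E X y\<^sub>1 \<inter> nbhd E X y\<^sub>3) \<le> 1" "card (nbhd E X y\<^sub>2 \<inter> nbhd E X y\<^sub>3) \<le> 1"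
    using c4_freeD[OF assms(3)] y y\<^sub>3 by blast+
  then have "card X < sparse_count E X {y\<^sub>1, y\<^sub>2, y\<^sub>3}"
    using y(3) y\<^sub>3 by (intro sparse_count_gain_triple[OF assms(1)] deg disj few_new) auto
  moreover have "sparse_count E X {y\<^sub>1, y\<^sub>2, y\<^sub>3} \<le> card X"
    using no_gain y y\<^sub>3 by simp
  ultimately show False by simp
qed

lemma double_sum_card_nbhd_le:
  assumes "finite X" "finite Y" and "c4_free E Y X"
  shows "2 * (\<Sum>x\<in>X. card (nbhd E Y x)) \<le> (card Y choose 2) + 3 * card X"
proof -
  have "2 * (\<Sum>x\<in>X. card (nbhd E Y x)) \<le> (\<Sum>x\<in>X. (card (nbhd E Y x) choose 2) + 3)"
    unfolding sum_distrib_left by (intro sum_mono double_le_choose_two_add_3)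
  also have "\<dots> = (\<Sum>x\<in>X. card (nbhd E Y x) choose 2) + 3 * card X"
    by (simp add: sum.distrib)
  also have "(\<Sum>x\<in>X. card (nbhd E Y x) choose 2) \<le> card Y choose 2"
    using assms nbhd_subset unfolding c4_free_def
    by (intro sum_choose_two_le_if_pairwise_meet_le_1) auto
  finally show ?thesis by simp
qed

text \<open>If no trace beats \<open>|X|\<close>, there are at least \<open>3 |Y| - 1\<close> edges, whereas pair counting on the
  side of \<open>X\<close> allows at most \<open>((|Y| choose 2) + 3 |X|) / 2\<close>.\<close>

lemma sparse_gain_if_card_4_to_6:
  assumes "simple_graph n E" and "bipartition n E X Y"
    and "c4_free E X Y" and "c4_free E Y X"
    and "(card X = 4 \<and> card Y = 3) \<or> (card X = 5 \<and> card Y = 4) \<or> (card X = 6 \<and> card Y = 6)"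
  shows "\<exists>T\<subseteq>Y. card X < sparse_count E X T"
proof (rule ccontr)
  assume "\<not> ?thesis"
  then have no_gain: "\<forall>T\<subseteq>Y. sparse_count E X T \<le> card X"
    by (simp add: not_less)
  note fin = bipartition_finite[OF assms(2)]
  have "(2 + 1) * card Y \<le> (\<Sum>y\<in>Y. card (nbhd E X y)) + 1 * card {y\<in>Y. card (nbhd E X y) = 2}"
    using two_le_card_nbhd_if_no_gain[OF fin(1) no_gain] by (intro sum_ge_with_exceptions fin) force+
  moreover have "card {y\<in>Y. card (nbhd E X y) = 2} \<le> 1"
    using assms(5) by (intro card_degree_two_le_1_if_no_gain[OF fin assms(3) no_gain]) auto
  moreover have "(\<Sum>y\<in>Y. card (nbhd E X y)) = (\<Sum>x\<in>X. card (nbhd E Y x))"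
    using sum_card_nbhd_swap[OF fin] simple_graph_sym[OF assms(1)] by blast
  moreover note double_sum_card_nbhd_le[OF fin assms(4)]
  ultimately show False
    using assms(5) by (auto simp: choose_two)
qed

text \<open>A side with \<open>j\<close> vertices is itself a 1-sparse set; otherwise, as \<open>2 j \<le> n + 3\<close>,
  one side has exactly \<open>j - 1\<close> vertices and it suffices to find a trace beating it.\<close>

lemma dense_or_sparse_if_BIP:
  assumes "BIP n E" and "2 * j \<le> n + 3"
    and gain: "\<And>X Y. bipartition n E X Y \<Longrightarrow> c4_free E X Y \<Longrightarrow> c4_free E Y X \<Longrightarrow>
      card X + 1 = j \<Longrightarrow> card Y < j \<Longrightarrow> \<exists>T\<subseteq>Y. card X < sparse_count E X T"
  shows "dense_or_sparse n E 1 4 j"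
proof (cases "\<exists>S. k_dense_set n E 1 4 S")
  case True
  then show ?thesis
    unfolding dense_or_sparse_def by blast
next
  case False
  have sg: "simple_graph n E"
    using assms(1) unfolding BIP_def by blast
  obtain X Y where bip: "bipartition n E X Y"
    using BIP_obtain_bipartition[OF assms(1)] .
  then have bip': "bipartition n E Y X"
    by (rule bipartition_swap)
  have c4: "c4_free E X Y" "c4_free E Y X"
    using False c4_free_iff_no_dense_set[OF sg] bip bip' by blast+
  have n: "card X + card Y = n"
    by (rule bipartition_card[OF bip])
  have "(\<exists>T\<subseteq>Y. j \<le> sparse_count E X T) \<or> (\<exists>T\<subseteq>X. j \<le> sparse_count E Y T)"
  proof (cases "j \<le> card X \<or> j \<le> card Y")
    case True
    then show ?thesis
      by (metis empty_subsetI sparse_count_empty)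
  next
    case False
    then have "card X + 1 = j \<and> card Y < j \<or> card Y + 1 = j \<and> card X < j"
      using n assms(2) by linarith
    then show ?thesis
      using gain[OF bip c4] gain[OF bip' c4(2,1)] by (metis Suc_eq_plus1 Suc_leI)
  qed
  then show ?thesis
    using sparse_set_of_sparse_count[OF sg bip] sparse_set_of_sparse_count[OF sg bip']
    unfolding dense_or_sparse_def by blast
qed

lemma dense_or_sparse_BIP_1_4:
  assumes "BIP n E"
    and "(j, n) \<in> {(3, 4), (4, 5), (5, 7), (6, 9), (7, 12)} \<or> n = 2 * j - 1"
  shows "dense_or_sparse n E 1 4 j"
proof (rule dense_or_sparse_if_BIP[OF assms(1)])
  show "2 * j \<le> n + 3"
    using assms(2) by auto
next
  fix X Y
  assume bip: "bipartition n E X Y" and c4: "c4_free E X Y" "c4_free E Y X"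
    and X: "card X + 1 = j" and Y: "card Y < j"
  have sg: "simple_graph n E"
    using assms(1) unfolding BIP_def by blast
  have n: "card X + card Y = n"
    by (rule bipartition_card[OF bip])
  then have "(j, n) \<in> {(3, 4), (4, 5), (5, 7), (6, 9), (7, 12)}"
    using assms(2) X Y by auto
  then consider "card X \<le> 3" "2 \<le> card Y"
    | "(card X = 4 \<and> card Y = 3) \<or> (card X = 5 \<and> card Y = 4) \<or> (card X = 6 \<and> card Y = 6)"
    using X n by auto
  then show "\<exists>T\<subseteq>Y. card X < sparse_count E X T"
  proof cases
    case 1
    then show ?thesis
      by (rule sparse_gain_if_card_le_3[OF bipartition_finite(1)[OF bip] c4(1)])
  next
    case 2
    then show ?thesis
      by (rule sparse_gain_if_card_4_to_6[OF sg bip c4])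
  qed
qed

section \<open>Lower bounds\<close>

lemma no_sparse_set_if_sparse_count_less:
  assumes "simple_graph n E" and "bipartition n E X Y"
    and "\<forall>T\<subseteq>Y. sparse_count E X T < j"
  shows "\<not> (\<exists>S. k_sparse_set n E 1 j S)"
proof
  assume "\<exists>S. k_sparse_set n E 1 j S"
  then obtain S where "S \<subseteq> {0..<n}" "card S = j" "\<forall>v\<in>S. card {u\<in>S. E v u} \<le> 1"
    unfolding k_sparse_set_def by blast
  then show False
    using card_le_sparse_count[OF assms(1,2)] assms(3) by (metis inf_le2 not_le)
qed

lemma sum_choose_two_sparse_le:
  assumes "simple_graph n E" and "bipartition n E X Y" and "c4_free E X Y"
    and "S \<subseteq> {0..<n}" and "\<forall>v\<in>S. card {u\<in>S. E v u} \<le> 1"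
  shows "(\<Sum>y\<in>S \<inter> Y. (card (nbhd E X y) - 1) choose 2) \<le> (card X - card (S \<inter> X)) choose 2"
proof -
  note fin = bipartition_finite[OF assms(2)]
  have finS: "finite S"
    using assms(4) finite_subset by blast
  define M where "M y = nbhd E X y - S" for y
  have "(\<Sum>y\<in>S \<inter> Y. card (M y) choose 2) \<le> card (X - S \<inter> X) choose 2"
  proof (rule sum_choose_two_le_if_pairwise_meet_le_1)
    show "M y \<subseteq> X - S \<inter> X" for y
      unfolding M_def using nbhd_subset by blast
    show "card (M y \<inter> M y') \<le> 1" if "y \<in> S \<inter> Y" "y' \<in> S \<inter> Y" "y \<noteq> y'" for y y'
    proof -
      have "card (M y \<inter> M y') \<le> card (nbhd E X y \<inter> nbhd E X y')"
        unfolding M_def using finite_nbhd[OF fin(1)] by (intro card_mono) auto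
      also have "\<dots> \<le> 1"
        using c4_freeD[OF assms(3)] that by blast
      finally show ?thesis .
    qed
  qed (use fin finS in auto)
  moreover have "card (X - S \<inter> X) = card X - card (S \<inter> X)"
    using fin(1) by (simp add: card_Diff_subset)
  moreover have "(card (nbhd E X y) - 1) choose 2 \<le> card (M y) choose 2" if "y \<in> S \<inter> Y" for y
  proof -
    have "card (nbhd E X y) \<le> card (M y \<union> {u\<in>S. E y u})"
      unfolding M_def nbhd_def using simple_graph_sym[OF assms(1)] fin(1) finS
      by (intro card_mono) auto
    also have "\<dots> \<le> card (M y) + card {u\<in>S. E y u}"
      by (rule card_Un_le)
    finally have "card (nbhd E X y) - 1 \<le> card (M y)"
      using assms(5) that by fastforce
    then show ?thesis
      by (rule binomial_right_mono)
  qed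
  then have "(\<Sum>y\<in>S \<inter> Y. (card (nbhd E X y) - 1) choose 2) \<le> (\<Sum>y\<in>S \<inter> Y. card (M y) choose 2)"
    by (rule sum_mono)
  ultimately show ?thesis
    by simp
qed

text \<open>A vertex of degree \<open>d \<ge> 3\<close> in a 1-sparse set has at least \<open>d - 1\<close> neighbours outside it;
  these neighbourhoods pairwise share at most one vertex, so they cover at least one pair,
  and at least three pairs when \<open>d \<ge> 4\<close>, of the \<open>x\<close> free vertices on the other side.\<close>

lemma side_fits_if_sparse:
  assumes "simple_graph n E" and "bipartition n E X Y" and "c4_free E X Y"
    and "S \<subseteq> {0..<n}" and "\<forall>v\<in>S. card {u\<in>S. E v u} \<le> 1"
    and "\<forall>y\<in>Y. 3 \<le> card (nbhd E X y)" and "card {y\<in>Y. card (nbhd E X y) < 4} \<le> k"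
  shows "side_fits (card (S \<inter> Y)) (card X - card (S \<inter> X)) k"
proof -
  define f where "f y = (card (nbhd E X y) - 1) choose 2" for y
  have fin: "finite (S \<inter> Y)"
    using bipartition_finite[OF assms(2)] by simp
  have ge1: "1 \<le> f y" if "y \<in> S \<inter> Y" for y
    using binomial_right_mono[of 2 "card (nbhd E X y) - 1" 2] assms(6) that unfolding f_def by force
  have ge3: "1 + 2 \<le> f y" if "\<not> card (nbhd E X y) < 4" for y
  proof -
    have "3 choose 2 \<le> f y"
      unfolding f_def using that by (intro binomial_right_mono) simp
    then show ?thesis
      by (simp add: choose_two)
  qed
  have "card (S \<inter> Y) \<le> (\<Sum>y\<in>S \<inter> Y. f y)"
    using sum_ge_with_exceptions[OF fin, where a=1 and c=0 and P="\<lambda>_. False"] ge1 by simp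
  moreover have "3 * card (S \<inter> Y) \<le> (\<Sum>y\<in>S \<inter> Y. f y) + 2 * card {y\<in>S \<inter> Y. card (nbhd E X y) < 4}"
    using sum_ge_with_exceptions[OF fin, where a=1 and c=2 and P="\<lambda>y. card (nbhd E X y) < 4" and f=f]
      ge1 ge3 by simp
  moreover have "card {y\<in>S \<inter> Y. card (nbhd E X y) < 4} \<le> card {y\<in>Y. card (nbhd E X y) < 4}"
    using bipartition_finite[OF assms(2)] by (intro card_mono) auto
  moreover note assms(7)
  moreover have "(\<Sum>y\<in>S \<inter> Y. f y) \<le> (card X - card (S \<inter> X)) choose 2"
    unfolding f_def by (rule sum_choose_two_sparse_le[OF assms(1-5)])
  ultimately show ?thesis
    unfolding side_fits_def by linarith
qed

lemma no_sparse_set_if_sides_cannot_fit: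
  assumes "simple_graph n E" and "bipartition n E X Y"
    and "c4_free E X Y" and "c4_free E Y X"
    and "\<forall>y\<in>Y. 3 \<le> card (nbhd E X y)" and "\<forall>x\<in>X. 3 \<le> card (nbhd E Y x)"
    and "card {y\<in>Y. card (nbhd E X y) < 4} \<le> k\<^sub>Y" and "card {x\<in>X. card (nbhd E Y x) < 4} \<le> k\<^sub>X"
    and "\<forall>a\<le>j. a \<le> card X \<longrightarrow> j - a \<le> card Y \<longrightarrow>
      \<not> (side_fits (j - a) (card X - a) k\<^sub>Y \<and> side_fits a (card Y - (j - a)) k\<^sub>X)"
  shows "\<not> (\<exists>S. k_sparse_set n E 1 j S)"
proof
  assume "\<exists>S. k_sparse_set n E 1 j S"
  then obtain S where S: "S \<subseteq> {0..<n}" "card S = j" "\<forall>v\<in>S. card {u\<in>S. E v u} \<le> 1"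
    unfolding k_sparse_set_def by blast
  note bip' = bipartition_swap[OF assms(2)]
  note fin = bipartition_finite[OF assms(2)]
  have "S = (S \<inter> X) \<union> (S \<inter> Y)" "(S \<inter> X) \<inter> (S \<inter> Y) = {}"
    using S(1) assms(2) unfolding bipartition_def by blast+
  then have "card (S \<inter> X) + card (S \<inter> Y) = j"
    using S(2) fin card_Un_disjoint[of "S \<inter> X" "S \<inter> Y"] by simp
  moreover have "card (S \<inter> X) \<le> card X" "card (S \<inter> Y) \<le> card Y"
    using fin by (simp_all add: card_mono)
  moreover note side_fits_if_sparse[OF assms(1,2,3) S(1,3) assms(5,7)]
    side_fits_if_sparse[OF assms(1) bip' assms(4) S(1,3) assms(6,8)]
  ultimately show False
    using assms(9) by (metis add_diff_cancel_left' add_diff_cancel_right' le_add1)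
qed

lemma bipartite_adjD:
  assumes "bipartite_adj adj p"
  shows "p \<le> length adj" and "u < length adj \<Longrightarrow> distinct (adj ! u)"
    and "adj_graph adj u v \<Longrightarrow> v < length adj \<and> adj_graph adj v u \<and> (u < p \<longleftrightarrow> \<not> v < p)"
proof -
  have all: "\<forall>u\<in>{0..<length adj}. distinct (adj ! u) \<and>
      (\<forall>v\<in>set (adj ! u). v < length adj \<and> u \<in> set (adj ! v) \<and> (u < p \<longleftrightarrow> \<not> v < p))"
    using assms unfolding bipartite_adj_def list_all_iff set_upt by blast
  show "p \<le> length adj"
    using assms unfolding bipartite_adj_def by simp
  show "u < length adj \<Longrightarrow> distinct (adj ! u)"
    using all by simp
  assume "adj_graph adj u v"
  then have "u \<in> {0..<length adj}" "v \<in> set (adj ! u)"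
    unfolding adj_graph_def by auto
  then have "v < length adj \<and> u \<in> set (adj ! v) \<and> (u < p \<longleftrightarrow> \<not> v < p)"
    using all by blast
  then show "v < length adj \<and> adj_graph adj v u \<and> (u < p \<longleftrightarrow> \<not> v < p)"
    using \<open>u \<in> {0..<length adj}\<close> unfolding adj_graph_def by simp
qed

lemma simple_graph_adj_graph: "bipartite_adj adj p \<Longrightarrow> simple_graph (length adj) (adj_graph adj)"
  unfolding simple_graph_def using bipartite_adjD(3) by (metis adj_graph_def)

lemma BIP_adj_graph: "bipartite_adj adj p \<Longrightarrow> BIP (length adj) (adj_graph adj)"
  unfolding BIP_def bipartite_def using simple_graph_adj_graph bipartite_adjD(3) by (metis lessThan_iff)

lemma bipartition_adj_graph:
  "bipartite_adj adj p \<Longrightarrow> bipartition (length adj) (adj_graph adj) {0..<p} {p..<length adj}"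
  unfolding bipartition_def using bipartite_adjD(1,3) by fastforce

lemma nbhd_adj_graph:
  assumes "bipartite_adj adj p" and "bipartition (length adj) (adj_graph adj) X Y" and "y \<in> Y"
  shows "nbhd (adj_graph adj) X y = set (adj ! y)"
proof -
  have y: "y < length adj"
    using bipartition_subset(2)[OF assms(2)] assms(3) by auto
  have "x \<in> X" if "x \<in> set (adj ! y)" for x
    using that y bipartition_edge(2)[OF assms(2) simple_graph_adj_graph[OF assms(1)]] assms(3)
    unfolding adj_graph_def by blast
  then show ?thesis
    unfolding nbhd_def using y bipartite_adjD(3)[OF assms(1)] unfolding adj_graph_def by blast
qed

lemma card_nbhd_adj_graph:
  assumes "bipartite_adj adj p" and "bipartition (length adj) (adj_graph adj) X Y" and "y \<in> Y"
  shows "card (nbhd (adj_graph adj) X y) = length (adj ! y)"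
  using nbhd_adj_graph[OF assms] distinct_card bipartite_adjD(2)[OF assms(1)]
    bipartition_subset(2)[OF assms(2)] assms(3) by force

lemma c4_free_adj_graph:
  assumes "bipartite_adj adj p" and "c4_free_adj adj"
  shows "c4_free (adj_graph adj) {0..<p} {p..<length adj}"
proof -
  note nbhd = nbhd_adj_graph[OF assms(1) bipartition_adj_graph[OF assms(1)]]
  have "card (set (adj ! u) \<inter> set (adj ! v)) \<le> 1" if "u < v" "v < length adj" for u v
  proof -
    have "set (adj ! u) \<inter> set (adj ! v) = set (filter (\<lambda>x. x \<in> set (adj ! v)) (adj ! u))"
      by auto
    moreover have "length (filter (\<lambda>x. x \<in> set (adj ! v)) (adj ! u)) \<le> 1"
      using assms(2) that unfolding c4_free_adj_def list_all_iff by auto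
    ultimately show ?thesis
      using card_length le_trans by metis
  qed
  then show ?thesis
    unfolding c4_free_def using nbhd by (metis Int_commute atLeastLessThan_iff linorder_neq_iff)
qed

lemma ramsey_num_BIP_1_4_eqI:
  assumes "\<And>E. BIP R E \<Longrightarrow> dense_or_sparse R E 1 4 j"
    and "bipartite_adj adj p" and "c4_free_adj adj" and "R = Suc (length adj)"
    and "\<not> (\<exists>S. k_sparse_set (length adj) (adj_graph adj) 1 j S)"
  shows "ramsey_num BIP 1 4 j = R"
proof (rule ramsey_num_eqI[where G = BIP, OF BIP_restrict_graph assms(1)])
  have "\<not> (\<exists>S. k_dense_set (length adj) (adj_graph adj) 1 4 S)"
    using c4_free_iff_no_dense_set[OF simple_graph_adj_graph bipartition_adj_graph]
      c4_free_adj_graph assms(2,3) by blast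
  then show "\<not> dense_or_sparse (R - 1) (adj_graph adj) 1 4 j"
    using assms(4,5) unfolding dense_or_sparse_def by simp
qed (use assms(2,4) BIP_adj_graph in auto)

lemma sparse_count_adj_graph:
  assumes "bipartite_adj adj p" and "distinct ys"
  shows "sparse_count (adj_graph adj) {0..<p} (set ys) = sparse_count_adj adj p ys"
proof -
  have E: "adj_graph adj x y \<longleftrightarrow> y \<in> set (adj ! x)" if "x < p" for x y
    using that bipartite_adjD(1)[OF assms(1)] unfolding adj_graph_def by auto
  have "untouched (adj_graph adj) {0..<p} (set ys) =
      set (filter (\<lambda>x. list_all (\<lambda>y. y \<notin> set (adj ! x)) ys) [0..<p])"
    unfolding untouched_def using E by (auto simp: list_all_iff)
  moreover have "privately_reached (adj_graph adj) {0..<p} (set ys) =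
      set (filter (\<lambda>y. list_ex (\<lambda>x. y \<in> set (adj ! x) \<and>
         list_all (\<lambda>y'. y' \<in> set (adj ! x) \<longrightarrow> y' = y) ys) [0..<p]) ys)"
    unfolding privately_reached_def using E by (auto simp: list_all_iff list_ex_iff)
  moreover have card_filter: "card (set (filter P xs)) = length (filter P xs)" if "distinct xs" for P xs
    using that by (intro distinct_card) simp
  ultimately show ?thesis
    unfolding sparse_count_def sparse_count_adj_def
    by (simp only: card_filter distinct_card[OF assms(2)] distinct_upt assms(2))
qed

lemma no_sparse_set_if_enumeration_certificate:
  assumes "enumeration_certificate adj p j"
  shows "\<not> (\<exists>S. k_sparse_set (length adj) (adj_graph adj) 1 j S)"
proof -
  have wf: "bipartite_adj adj p"
    and traces: "list_all (\<lambda>ys. sparse_count_adj adj p ys < j) (subseqs [p..<length adj])"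
    using assms unfolding enumeration_certificate_def by blast+
  show ?thesis
  proof (rule no_sparse_set_if_sparse_count_less[OF simple_graph_adj_graph bipartition_adj_graph])
    show "\<forall>T\<subseteq>{p..<length adj}. sparse_count (adj_graph adj) {0..<p} T < j"
    proof (intro allI impI)
      fix T assume "T \<subseteq> {p..<length adj}"
      then obtain ys where "ys \<in> set (subseqs [p..<length adj])" "T = set ys"
        using subset_subseqs[of T "[p..<length adj]"] by auto
      moreover have "distinct ys"
        using subseqs_distinctD[OF calculation(1)] by simp
      ultimately show "sparse_count (adj_graph adj) {0..<p} T < j"
        using sparse_count_adj_graph[OF wf] traces unfolding list_all_iff by auto
    qed
  qed (rule wf)+
qed

lemma no_sparse_set_if_counting_certificate:
  assumes "counting_certificate adj p j"
  shows "\<not> (\<exists>S. k_sparse_set (length adj) (adj_graph adj) 1 j S)"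
proof -
  note cert = assms[unfolded counting_certificate_def]
  note wf = cert[THEN conjunct1] and c4_adj = cert[THEN conjunct2, THEN conjunct1]
    and deg3 = cert[THEN conjunct2, THEN conjunct2, THEN conjunct1]
    and fits = cert[THEN conjunct2, THEN conjunct2, THEN conjunct2]
  let ?X = "{0..<p}" and ?Y = "{p..<length adj}"
  note sg = simple_graph_adj_graph[OF wf]
  note bip = bipartition_adj_graph[OF wf]
  note bip' = bipartition_swap[OF bip]
  have c4: "c4_free (adj_graph adj) ?X ?Y" "c4_free (adj_graph adj) ?Y ?X"
    using c4_free_adj_graph[OF wf c4_adj] c4_free_iff_no_dense_set[OF sg bip]
      c4_free_iff_no_dense_set[OF sg bip'] by blast+
  note deg_Y = card_nbhd_adj_graph[OF wf bip] and deg_X = card_nbhd_adj_graph[OF wf bip']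
  have p: "p \<le> length adj"
    by (rule bipartite_adjD(1)[OF wf])
  have low_count: "card {v\<in>V. card (nbhd (adj_graph adj) W v) < 4}
      \<le> length (filter (\<lambda>u. length (adj ! u) < 4) vs)"
    if "V = set vs" "\<And>v. v \<in> V \<Longrightarrow> card (nbhd (adj_graph adj) W v) = length (adj ! v)" for V W vs
  proof -
    have "{v\<in>V. card (nbhd (adj_graph adj) W v) < 4} = set (filter (\<lambda>u. length (adj ! u) < 4) vs)"
      using that by auto
    then show ?thesis
      by (simp only: card_length)
  qed
  show ?thesis
  proof (rule no_sparse_set_if_sides_cannot_fit[OF sg bip c4])
    show "\<forall>y\<in>?Y. 3 \<le> card (nbhd (adj_graph adj) ?X y)" "\<forall>x\<in>?X. 3 \<le> card (nbhd (adj_graph adj) ?Y x)"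
      using deg3 deg_Y deg_X p unfolding list_all_iff by auto
    show "card {y\<in>?Y. card (nbhd (adj_graph adj) ?X y) < 4}
        \<le> length (filter (\<lambda>u. length (adj ! u) < 4) [p..<length adj])"
      using deg_Y by (intro low_count) auto
    show "card {x\<in>?X. card (nbhd (adj_graph adj) ?Y x) < 4}
        \<le> length (filter (\<lambda>u. length (adj ! u) < 4) [0..<p])"
      using deg_X by (intro low_count) auto
    show "\<forall>a\<le>j. a \<le> card ?X \<longrightarrow> j - a \<le> card ?Y \<longrightarrow>
        \<not> (side_fits (j - a) (card ?X - a) (length (filter (\<lambda>u. length (adj ! u) < 4) [p..<length adj])) \<and>
           side_fits a (card ?Y - (j - a)) (length (filter (\<lambda>u. length (adj ! u) < 4) [0..<p])))"
      using fits unfolding list_all_iff by auto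
  qed
qed

lemma ramsey_num_BIP_1_4_by_enumeration:
  assumes "(j, R) \<in> {(3, 4), (4, 5), (5, 7), (6, 9), (7, 12)} \<or> R = 2 * j - 1"
    and "enumeration_certificate adj p j" and "R = Suc (length adj)"
  shows "ramsey_num BIP 1 4 j = R"
  using assms(2,3) no_sparse_set_if_enumeration_certificate[OF assms(2)] dense_or_sparse_BIP_1_4[OF _ assms(1)]
  unfolding enumeration_certificate_def by (intro ramsey_num_BIP_1_4_eqI) blast+

lemma ramsey_num_BIP_1_4_by_counting:
  assumes "(j, R) \<in> {(3, 4), (4, 5), (5, 7), (6, 9), (7, 12)} \<or> R = 2 * j - 1"
    and "counting_certificate adj p j" and "R = Suc (length adj)"
  shows "ramsey_num BIP 1 4 j = R"
  using assms(2,3) no_sparse_set_if_counting_certificate[OF assms(2)] dense_or_sparse_BIP_1_4[OF _ assms(1)]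
  unfolding counting_certificate_def by (intro ramsey_num_BIP_1_4_eqI) blast+

lemma ramsey_num_BIP_1_4_3: "ramsey_num BIP 1 4 3 = 4"
  by (rule ramsey_num_BIP_1_4_by_enumeration[OF _ witness_3_certificate])
    (simp_all add: witness_3_def)

lemma ramsey_num_BIP_1_4_4: "ramsey_num BIP 1 4 4 = 5"
  by (rule ramsey_num_BIP_1_4_by_enumeration[OF _ witness_4_certificate])
    (simp_all add: witness_4_def)

lemma ramsey_num_BIP_1_4_5: "ramsey_num BIP 1 4 5 = 7"
  by (rule ramsey_num_BIP_1_4_by_enumeration[OF _ witness_5_certificate])
    (simp_all add: witness_5_def)

lemma ramsey_num_BIP_1_4_6: "ramsey_num BIP 1 4 6 = 9"
  by (rule ramsey_num_BIP_1_4_by_enumeration[OF _ witness_6_certificate])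
    (simp_all add: witness_6_def)

lemma ramsey_num_BIP_1_4_7: "ramsey_num BIP 1 4 7 = 12"
  by (rule ramsey_num_BIP_1_4_by_enumeration[OF _ witness_7_certificate])
    (simp_all add: witness_7_def)

lemma ramsey_num_BIP_1_4_8: "ramsey_num BIP 1 4 8 = 15"
  by (rule ramsey_num_BIP_1_4_by_counting[OF _ witness_8_certificate])
    (simp_all add: witness_8_def)

lemma ramsey_num_BIP_1_4_9: "ramsey_num BIP 1 4 9 = 17"
  by (rule ramsey_num_BIP_1_4_by_counting[OF _ witness_9_certificate])
    (simp_all add: witness_9_def)

lemma ramsey_num_BIP_1_4_13: "ramsey_num BIP 1 4 13 = 25"
  by (rule ramsey_num_BIP_1_4_by_counting[OF _ witness_13_certificate])
    (simp_all add: witness_13_def)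

lemma ramsey_num_BIP_1_4_14: "ramsey_num BIP 1 4 14 = 27"
  by (rule ramsey_num_BIP_1_4_by_counting[OF _ witness_14_certificate])
    (simp_all add: witness_14_def)

theorem theorem5p3:
  shows "(\<forall>j\<in>{4,5,6}. ramsey_num BIP 1 4 j = 2 * j - 3)
       \<and> (\<forall>j\<in>{3,7}. ramsey_num BIP 1 4 j = 2 * j - 2)
       \<and> (\<forall>j\<in>{8,9,13,14}. ramsey_num BIP 1 4 j = 2 * j - 1)"
  using ramsey_num_BIP_1_4_3 ramsey_num_BIP_1_4_4 ramsey_num_BIP_1_4_5 ramsey_num_BIP_1_4_6
    ramsey_num_BIP_1_4_7 ramsey_num_BIP_1_4_8 ramsey_num_BIP_1_4_9 ramsey_num_BIP_1_4_13
    ramsey_num_BIP_1_4_14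
  by simp

end
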